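(* Let $G$ be an unweighted digraph without loops having a reciprocal leaf $i$, and let $\widetilde G$ be the digraph obtained from $G$ by deleting vertex $i$ together with the two edges joining it to the rest of $G$. Let $M(t)$ and $\widetilde M(t)$ be the directed deformed graph Laplacians of $G$ and $\widetilde G$. Then $M(t)$ and $\widetilde M(t)$ have the same finite eigenvalues, with the same algebraic and the same geometric multiplicities.
   Context: A digraph $G=(V,E)$, no loops or multiple edges, adjacency matrix $A$ ($A_{ij}=1$ iff $(i,j)\in E$); $S=A\circ A^T$, $D=\mathrm{diag}(\mathrm{diag}(A^2))$; directed deformed graph Laplacian $M(t)=I-At+(D-I)t^2+(A-S)t^3$. A vertex $i$ is a reciprocal leaf if there is exactly one vertex $j\neq i$ with $(i,j)\in E$ or $(j,i)\in E$, and both $(i,j),(j,i)\in E$. For a regular square polynomial matrix $M(t)$, a finite eigenvalue $\lambda$ is a root of $\det M(t)$, its algebraic multiplicity is its multiplicity as such a root, and its geometric multiplicity is $\dim\ker M(\lambda)$. *)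

theory Defs
  imports "HOL-Computational_Algebra.Polynomial" "Jordan_Normal_Form.Matrix_Kernel"
begin

definition digraph :: "nat \<Rightarrow> (nat \<times> nat) set \<Rightarrow> bool" where
  "digraph n E \<longleftrightarrow> E \<subseteq> {..<n} \<times> {..<n} \<and> (\<forall>v. (v, v) \<notin> E)"

definition adj_mat :: "nat \<Rightarrow> (nat \<times> nat) set \<Rightarrow> complex mat" where
  "adj_mat n E = mat n n (\<lambda>(i, j). if (i, j) \<in> E then 1 else 0)"

definition hadamard :: "'a::times mat \<Rightarrow> 'a mat \<Rightarrow> 'a mat" where
  "hadamard A B = mat (dim_row A) (dim_col A) (\<lambda>(i, j). A $$ (i, j) * B $$ (i, j))"

definition diag_part :: "'a::zero mat \<Rightarrow> 'a mat" where
  "diag_part B = mat (dim_row B) (dim_col B) (\<lambda>(i, j). if i = j then B $$ (i, i) else 0)"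

definition poly_mat3 :: "'a::comm_ring_1 mat \<Rightarrow> 'a mat \<Rightarrow> 'a mat \<Rightarrow> 'a mat \<Rightarrow> 'a poly mat" where
  "poly_mat3 C0 C1 C2 C3 = mat (dim_row C0) (dim_col C0)
     (\<lambda>ij. [:C0 $$ ij, C1 $$ ij, C2 $$ ij, C3 $$ ij:])"

definition ddgl :: "nat \<Rightarrow> (nat \<times> nat) set \<Rightarrow> complex poly mat" where
  "ddgl n E = (let A = adj_mat n E; S = hadamard A (transpose_mat A);
                   D = diag_part (A * A) in
     poly_mat3 (1\<^sub>m n) (- A) (D - 1\<^sub>m n) (A - S))"

definition eval_pmat :: "'a::comm_ring_1 poly mat \<Rightarrow> 'a \<Rightarrow> 'a mat" where
  "eval_pmat M x = map_mat (\<lambda>p. poly p x) M"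

definition regular_pmat :: "'a::comm_ring_1 poly mat \<Rightarrow> bool" where
  "regular_pmat M \<longleftrightarrow> square_mat M \<and> det M \<noteq> 0"

definition finite_eigenvalue :: "'a::comm_ring_1 poly mat \<Rightarrow> 'a \<Rightarrow> bool" where
  "finite_eigenvalue M x \<longleftrightarrow> regular_pmat M \<and> poly (det M) x = 0"

definition alg_mult :: "'a::idom poly mat \<Rightarrow> 'a \<Rightarrow> nat" where
  "alg_mult M x = order x (det M)"

definition geom_mult :: "'a::field poly mat \<Rightarrow> 'a \<Rightarrow> nat" where
  "geom_mult M x = kernel_dim (eval_pmat M x)"

definition reciprocal_leaf :: "(nat \<times> nat) set \<Rightarrow> nat \<Rightarrow> bool" where
  "reciprocal_leaf E i \<longleftrightarrow> (\<exists>!j. j \<noteq> i \<and> ((i, j) \<in> E \<or> (j, i) \<in> E))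
     \<and> (\<forall>j. j \<noteq> i \<and> ((i, j) \<in> E \<or> (j, i) \<in> E) \<longrightarrow> (i, j) \<in> E \<and> (j, i) \<in> E)"

text \<open>Deleting vertex i from a digraph on {0..<n}, relabelling the remaining
  vertices order-preservingly onto {0..<n-1}.\<close>
definition del_vertex :: "nat \<Rightarrow> (nat \<times> nat) set \<Rightarrow> (nat \<times> nat) set" where
  "del_vertex i E = {(u, v). (let f = (\<lambda>k. if k < i then k else Suc k) in (f u, f v) \<in> E)}"

end

theory Submission
  imports Defs "Jordan_Normal_Form.Column_Operations"
begin

text \<open>Let \<open>j\<close> be the unique neighbour of the reciprocal leaf \<open>i\<close>. Since \<open>i\<close> has exactly
  one reciprocated edge, \<open>D\<^sub>i\<^sub>i = 1\<close>, so row and column \<open>i\<close> of \<open>M(t)\<close> are \<open>1\<close> on the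
  diagonal, \<open>-t\<close> at position \<open>j\<close> and \<open>0\<close> elsewhere. Adding \<open>t\<close> times row \<open>i\<close> to row \<open>j\<close>
  and \<open>t\<close> times column \<open>i\<close> to column \<open>j\<close> clears them and subtracts \<open>t\<^sup>2\<close> from the entry
  \<open>(j, j)\<close>; this is exactly the drop of \<open>D\<^sub>j\<^sub>j\<close> caused by deleting \<open>i\<close>, so what remains is
  \<open>1 \<oplus> M\<^sup>~(t)\<close>. The two operations are unimodular over \<open>\<complex>[t]\<close> and invertible after every
  evaluation \<open>t = x\<close>, hence \<open>det M = det M\<^sup>~\<close> and \<open>dim ker M(x) = dim ker M\<^sup>~(x)\<close>.\<close>

lemma sum_of_bool_eq_left:
  "finite A \<Longrightarrow> k \<in> A \<Longrightarrow> (\<Sum>l\<in>A. of_bool (l = k) * f l) = (f k :: 'a::semiring_1)"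
  by (simp add: Int_insert_right)

lemma sum_of_bool_eq_right:
  "finite A \<Longrightarrow> k \<in> A \<Longrightarrow> (\<Sum>l\<in>A. f l * of_bool (l = k)) = (f k :: 'a::semiring_1)"
  by (simp add: Int_insert_right)

lemma kernel_dim_reindex:
  fixes Z :: "'a::field mat"
  assumes Z: "Z \<in> carrier_mat n n" and p: "bij_betw p {0..<n} {0..<n}"
  shows "kernel_dim (mat n n (\<lambda>(r, c). Z $$ (p r, p c))) = kernel_dim Z"
proof -
  define P :: "'a mat" where "P = mat n n (\<lambda>(r, c). of_bool (r = p c))"
  define Q :: "'a mat" where "Q = mat n n (\<lambda>(r, c). of_bool (c = p r))"
  have p_lt: "k < n \<Longrightarrow> p k < n" for k using p by (auto simp: bij_betw_def)
  have p_inj: "k < n \<Longrightarrow> l < n \<Longrightarrow> p k = p l \<longleftrightarrow> k = l" for k l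
    using p by (auto simp: bij_betw_def inj_on_def)
  have PQ: "P * Q = 1\<^sub>m n"
  proof (rule eq_matI)
    fix r c assume "r < dim_row (1\<^sub>m n :: 'a mat)" "c < dim_col (1\<^sub>m n :: 'a mat)"
    then have rc: "r < n" "c < n" by auto
    have "(P * Q) $$ (r, c) = (\<Sum>k\<in>{0..<n}. of_bool (r = p k) * of_bool (c = p k))"
      using rc by (simp add: P_def Q_def scalar_prod_def)
    also have "\<dots> = (\<Sum>k\<in>{0..<n}. of_bool (r = k) * of_bool (c = k))"
      using sum.reindex_bij_betw[OF p, of "\<lambda>k. of_bool (r = k) * of_bool (c = k) :: 'a"] .
    also have "\<dots> = (1\<^sub>m n :: 'a mat) $$ (r, c)"
      using rc by (simp add: eq_commute[of r] sum_of_bool_eq_left)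
    finally show "(P * Q) $$ (r, c) = (1\<^sub>m n :: 'a mat) $$ (r, c)" .
  qed (auto simp: P_def Q_def)
  have QP: "Q * P = 1\<^sub>m n"
  proof (rule eq_matI)
    fix r c assume "r < dim_row (1\<^sub>m n :: 'a mat)" "c < dim_col (1\<^sub>m n :: 'a mat)"
    then have rc: "r < n" "c < n" by auto
    have "(Q * P) $$ (r, c) = (\<Sum>k\<in>{0..<n}. of_bool (k = p r) * of_bool (k = p c))"
      using rc by (simp add: P_def Q_def scalar_prod_def)
    also have "\<dots> = (1\<^sub>m n :: 'a mat) $$ (r, c)"
      using rc p_lt[OF rc(1)] p_inj[OF rc] by (simp add: sum_of_bool_eq_left)
    finally show "(Q * P) $$ (r, c) = (1\<^sub>m n :: 'a mat) $$ (r, c)" .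
  qed (auto simp: P_def Q_def)
  have QZP: "Q * Z * P = mat n n (\<lambda>(r, c). Z $$ (p r, p c))"
  proof (rule eq_matI)
    fix r c assume "r < dim_row (mat n n (\<lambda>(r, c). Z $$ (p r, p c)))"
      "c < dim_col (mat n n (\<lambda>(r, c). Z $$ (p r, p c)))"
    then have rc: "r < n" "c < n" by auto
    have "(Q * Z * P) $$ (r, c) = (\<Sum>l\<in>{0..<n}. (Q * Z) $$ (r, l) * of_bool (l = p c))"
      using rc Z by (simp add: P_def Q_def scalar_prod_def)
    also have "\<dots> = (Q * Z) $$ (r, p c)"
      using p_lt[OF rc(2)] by (simp add: sum_of_bool_eq_right)
    also have "\<dots> = (\<Sum>k\<in>{0..<n}. of_bool (k = p r) * Z $$ (k, p c))"
      using rc Z p_lt by (simp add: Q_def scalar_prod_def)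
    also have "\<dots> = Z $$ (p r, p c)"
      using p_lt[OF rc(1)] by (simp add: sum_of_bool_eq_left)
    finally show "(Q * Z * P) $$ (r, c) = mat n n (\<lambda>(r, c). Z $$ (p r, p c)) $$ (r, c)"
      using rc by simp
  qed (use Z in \<open>auto simp: P_def Q_def\<close>)
  have "similar_mat_wit (mat n n (\<lambda>(r, c). Z $$ (p r, p c))) Z Q P"
    using PQ QP QZP Z by (auto simp: similar_mat_wit_def P_def Q_def)
  from similar_mat_wit_kernel_dim[OF _ this] show ?thesis
    using Z by (simp add: kernel_dim_def)
qed

lemma det_eq_mat_delete_if_unit_row:
  fixes Z :: "'a::comm_ring_1 mat"
  assumes Z: "Z \<in> carrier_mat n n" and i: "i < n" and diag: "Z $$ (i, i) = 1"
    and row: "\<And>k. k < n \<Longrightarrow> k \<noteq> i \<Longrightarrow> Z $$ (i, k) = 0"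
  shows "det Z = det (mat_delete Z i i)"
proof -
  have "det Z = (\<Sum>k<n. Z $$ (i, k) * cofactor Z i k)"
    by (rule laplace_expansion_row[OF Z i])
  also have "\<dots> = Z $$ (i, i) * cofactor Z i i"
    by (rule sum.mono_neutral_right[where S = "{i}", simplified]) (use i row in auto)
  also have "\<dots> = det (mat_delete Z i i)"
    by (simp add: diag cofactor_def)
  finally show ?thesis .
qed

lemma kernel_dim_eq_mat_delete_if_unit_row_col:
  fixes Z :: "'a::field mat"
  assumes Z: "Z \<in> carrier_mat (Suc m) (Suc m)" and i: "i < Suc m" and diag: "Z $$ (i, i) = 1"
    and row: "\<And>k. k < Suc m \<Longrightarrow> k \<noteq> i \<Longrightarrow> Z $$ (i, k) = 0"
    and col: "\<And>k. k < Suc m \<Longrightarrow> k \<noteq> i \<Longrightarrow> Z $$ (k, i) = 0"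
  shows "kernel_dim Z = kernel_dim (mat_delete Z i i)"
proof -
  \<comment> \<open>\<open>p\<close> moves index \<open>i\<close> to the front, which makes the reindexed matrix block diagonal.\<close>
  define p where "p c = (if c = 0 then i else insert_index i (c - 1))" for c
  define q where "q r = (if r = i then 0 else Suc (delete_index i r))" for r
  have p: "bij_betw p {0..<Suc m} {0..<Suc m}"
    by (rule bij_betw_byWitness[where f' = q])
      (use i in \<open>auto simp: p_def q_def insert_index_def delete_index_def\<close>)
  have D: "mat_delete Z i i \<in> carrier_mat m m"
    using mat_delete_carrier[OF Z, of i i] by simp
  have block: "mat (Suc m) (Suc m) (\<lambda>(r, c). Z $$ (p r, p c))
    = four_block_mat (1\<^sub>m 1) (0\<^sub>m 1 m) (0\<^sub>m m 1) (mat_delete Z i i)"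
  proof (rule eq_matI)
    fix r c assume "r < dim_row (four_block_mat (1\<^sub>m 1) (0\<^sub>m 1 m) (0\<^sub>m m 1) (mat_delete Z i i) :: 'a mat)"
      "c < dim_col (four_block_mat (1\<^sub>m 1) (0\<^sub>m 1 m) (0\<^sub>m m 1) (mat_delete Z i i) :: 'a mat)"
    then have rc: "r < Suc m" "c < Suc m" using carrier_matD[OF Z] by auto
    have ins: "k < m \<Longrightarrow> insert_index i k < Suc m \<and> insert_index i k \<noteq> i" for k
      by (auto simp: insert_index_def)
    show "mat (Suc m) (Suc m) (\<lambda>(r, c). Z $$ (p r, p c)) $$ (r, c)
      = four_block_mat (1\<^sub>m 1) (0\<^sub>m 1 m) (0\<^sub>m m 1) (mat_delete Z i i) $$ (r, c)"
      using rc D ins[of "r - 1"] ins[of "c - 1"] diag row col carrier_matD[OF Z]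
      by (auto simp: p_def mat_delete_index[OF Z i i] four_block_mat_def)
  qed (use carrier_matD[OF Z] in auto)
  have "kernel_dim Z = kernel_dim (mat (Suc m) (Suc m) (\<lambda>(r, c). Z $$ (p r, p c)))"
    using kernel_dim_reindex[OF Z p] by simp
  also have "\<dots> = kernel.dim (1 + m) (four_block_mat (1\<^sub>m 1) (0\<^sub>m 1 m) (0\<^sub>m m 1) (mat_delete Z i i))"
    using carrier_matD[OF Z] by (simp add: block kernel_dim_def)
  also have "\<dots> = kernel.dim 1 (1\<^sub>m 1 :: 'a mat) + kernel.dim m (mat_delete Z i i)"
    by (rule kernel_four_block_0_mat[OF refl one_carrier_mat D])
  also have "\<dots> = kernel_dim (mat_delete Z i i)"
    using carrier_matD[OF Z] by (simp add: kernel_one_mat kernel_dim_def)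
  finally show ?thesis .
qed

locale leaf_elimination =
  fixes M M' :: "'a::comm_ring_1 mat" and m i j :: nat and t :: 'a
  assumes carrier_M: "M \<in> carrier_mat (Suc m) (Suc m)"
    and carrier_M': "M' \<in> carrier_mat m m"
    and leaf: "i < Suc m" and neighbour: "j < Suc m" "j \<noteq> i"
    and diag: "M $$ (i, i) = 1"
    and row: "\<And>k. k < Suc m \<Longrightarrow> k \<noteq> i \<Longrightarrow> M $$ (i, k) = (if k = j then - t else 0)"
    and col: "\<And>k. k < Suc m \<Longrightarrow> k \<noteq> i \<Longrightarrow> M $$ (k, i) = (if k = j then - t else 0)"
    and reduced: "\<And>r c. r < m \<Longrightarrow> c < m \<Longrightarrow>
      M' $$ (r, c) = M $$ (insert_index i r, insert_index i c)
        - (if insert_index i r = j \<and> insert_index i c = j then t * t else 0)"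
begin

definition cleared :: "'a mat" where
  "cleared = addcol t j i (addrow t j i M)"

lemma cleared_carrier: "cleared \<in> carrier_mat (Suc m) (Suc m)"
  using carrier_M unfolding cleared_def carrier_mat_def by simp

lemma cleared_index:
  assumes "r < Suc m" "c < Suc m"
  shows "cleared $$ (r, c) =
    (if c = j then t * (if r = j then t * M $$ (i, i) + M $$ (r, i) else M $$ (r, i))
      + (if r = j then t * M $$ (i, c) + M $$ (r, c) else M $$ (r, c))
     else if r = j then t * M $$ (i, c) + M $$ (r, c) else M $$ (r, c))"
  using assms carrier_M leaf neighbour unfolding carrier_mat_def cleared_def by simp

lemma cleared_diag: "cleared $$ (i, i) = 1"
  using cleared_index[OF leaf leaf] neighbour diag by simp

lemma cleared_row: "k < Suc m \<Longrightarrow> k \<noteq> i \<Longrightarrow> cleared $$ (i, k) = 0"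
  using cleared_index[OF leaf] neighbour diag row col by (auto simp: algebra_simps)

lemma cleared_col: "k < Suc m \<Longrightarrow> k \<noteq> i \<Longrightarrow> cleared $$ (k, i) = 0"
  using cleared_index[OF _ leaf] neighbour diag row col by (auto simp: algebra_simps)

lemma mat_delete_cleared: "mat_delete cleared i i = M'"
proof (rule eq_matI)
  fix r c assume "r < dim_row M'" "c < dim_col M'"
  then have rc: "r < m" "c < m" using carrier_M' by auto
  have ins: "insert_index i k < Suc m" "insert_index i k \<noteq> i" if "k < m" for k
    using that by (auto simp: insert_index_def)
  have "mat_delete cleared i i $$ (r, c) = cleared $$ (insert_index i r, insert_index i c)"
    by (rule mat_delete_index[symmetric, OF cleared_carrier leaf leaf rc])
  also have "\<dots> = M' $$ (r, c)"
    unfolding cleared_index[OF ins(1)[OF rc(1)] ins(1)[OF rc(2)]] reduced[OF rc]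
    using row[OF ins[OF rc(2)]] col[OF ins[OF rc(1)]] diag neighbour
    by (auto simp: algebra_simps)
  finally show "mat_delete cleared i i $$ (r, c) = M' $$ (r, c)" .
qed (use cleared_carrier carrier_M' in auto)

lemma det_eq: "det M = det M'"
proof -
  have "det M = det (addrow t j i M)"
    using det_addrow[OF leaf neighbour(2) carrier_M] by simp
  also have "\<dots> = det cleared"
    using det_addcol[OF leaf neighbour(2), of "addrow t j i M"] carrier_M by (simp add: cleared_def)
  also have "\<dots> = det M'"
    using det_eq_mat_delete_if_unit_row[OF cleared_carrier leaf cleared_diag cleared_row]
    by (simp add: mat_delete_cleared)
  finally show ?thesis .
qed

end

lemma leaf_elimination_kernel_dim:
  fixes M M' :: "'a::field mat"
  assumes "leaf_elimination M M' m i j t"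
  shows "kernel_dim M = kernel_dim M'"
proof -
  interpret leaf_elimination M M' m i j t by fact
  let ?n = "Suc m"
  let ?R = "addrow_mat ?n t j i" and ?C = "addrow_mat ?n t i j"
  have R: "addrow t j i M = ?R * M" by (rule addrow_mat[OF carrier_M leaf])
  have C: "cleared = addrow t j i M * ?C"
    unfolding cleared_def by (rule addcol_mat[OF _ leaf]) (use carrier_M in simp)
  have R_inv: "addrow_mat ?n (- t) j i * ?R = 1\<^sub>m ?n"
    using addrow_mat_inv[OF neighbour(1) leaf neighbour(2), of "- t"] by simp
  have C_inv: "?C * addrow_mat ?n (- t) i j = 1\<^sub>m ?n"
    using addrow_mat_inv[OF leaf neighbour(1), of t] neighbour(2) by simp
  have "kernel_dim M = kernel.dim ?n (?R * M)"
    using mat_kernel_mult_eq[OF carrier_M addrow_mat_carrier addrow_mat_carrier R_inv] carrier_M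
    by (simp add: kernel_dim_def)
  also have "\<dots> = kernel.dim ?n (?R * M * ?C)"
    using mat_kernel_dim_mult_eq_right[OF _ addrow_mat_carrier addrow_mat_carrier C_inv,
        of "?R * M" ?n] mult_carrier_mat[OF addrow_mat_carrier carrier_M]
    by simp
  also have "\<dots> = kernel_dim cleared"
    using cleared_carrier by (simp add: C R kernel_dim_def)
  also have "\<dots> = kernel_dim M'"
    using kernel_dim_eq_mat_delete_if_unit_row_col[OF cleared_carrier leaf cleared_diag
        cleared_row cleared_col]
    by (simp add: mat_delete_cleared)
  finally show ?thesis .
qed

lemma leaf_elimination_eval_pmat:
  assumes "leaf_elimination M M' m i j t"
  shows "leaf_elimination (eval_pmat M x) (eval_pmat M' x) m i j (poly t x)"
proof -
  interpret leaf_elimination M M' m i j t by fact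
  have ins: "insert_index i k < Suc m" if "k < m" for k
    using that by (auto simp: insert_index_def)
  show ?thesis
    by unfold_locales
      (use carrier_M carrier_M' leaf neighbour diag row col reduced ins
        in \<open>auto simp: eval_pmat_def\<close>)
qed

text \<open>The diagonal entry \<open>(A\<^sup>2)\<^sub>v\<^sub>v = D\<^sub>v\<^sub>v\<close>: the number of reciprocated neighbours of \<open>v\<close>.\<close>

definition recip_degree :: "nat \<Rightarrow> (nat \<times> nat) set \<Rightarrow> nat \<Rightarrow> nat" where
  "recip_degree n E v = card {k \<in> {0..<n}. (v, k) \<in> E \<and> (k, v) \<in> E}"

lemma ddgl_index:
  assumes "r < n" "c < n"
  shows "ddgl n E $$ (r, c) =
    [:of_bool (r = c), - of_bool ((r, c) \<in> E),
      of_bool (r = c) * (of_nat (recip_degree n E r) - 1), of_bool ((r, c) \<in> E \<and> (c, r) \<notin> E):]"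
proof -
  have "(adj_mat n E * adj_mat n E) $$ (r, r)
      = (\<Sum>k\<in>{0..<n}. of_bool ((r, k) \<in> E \<and> (k, r) \<in> E) :: complex)"
    using assms by (simp add: adj_mat_def scalar_prod_def del: sum_of_bool_eq, intro sum.cong, auto)
  also have "\<dots> = of_nat (recip_degree n E r)"
    by (simp add: recip_degree_def Int_def)
  finally show ?thesis
    using assms
    by (auto simp: ddgl_def Let_def poly_mat3_def adj_mat_def hadamard_def diag_part_def)
qed

lemma mem_del_vertex: "(r, c) \<in> del_vertex i E \<longleftrightarrow> (insert_index i r, insert_index i c) \<in> E"
  by (simp add: del_vertex_def insert_index_def)

lemma reciprocal_leafE:
  assumes "reciprocal_leaf E i"
  obtains j where "j \<noteq> i" "(i, j) \<in> E" "(j, i) \<in> E"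
    "\<And>k. k \<noteq> i \<Longrightarrow> (i, k) \<in> E \<or> (k, i) \<in> E \<Longrightarrow> k = j"
  using assms unfolding reciprocal_leaf_def by metis

lemma recip_degree_del_vertex:
  assumes i: "i < Suc m" and ij: "(i, j) \<in> E" "(j, i) \<in> E"
    and unique: "\<And>k. k \<noteq> i \<Longrightarrow> (i, k) \<in> E \<or> (k, i) \<in> E \<Longrightarrow> k = j"
  shows "recip_degree (Suc m) E (insert_index i r)
    = recip_degree m (del_vertex i E) r + of_bool (insert_index i r = j)"
proof -
  let ?v = "insert_index i r"
  let ?S = "{k \<in> {0..<Suc m}. (?v, k) \<in> E \<and> (k, ?v) \<in> E}"
  have v: "?v \<noteq> i" by (simp add: insert_index_def)
  have "?S - {i} = {k \<in> insert_index i ` {0..<m}. (?v, k) \<in> E \<and> (k, ?v) \<in> E}"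
    using insert_index_image[OF i] by auto
  also have "\<dots> = insert_index i ` {k \<in> {0..<m}. (r, k) \<in> del_vertex i E \<and> (k, r) \<in> del_vertex i E}"
    by (auto simp: mem_del_vertex)
  finally have "insert_index i ` {k \<in> {0..<m}. (r, k) \<in> del_vertex i E \<and> (k, r) \<in> del_vertex i E}
      = ?S - {i}" ..
  then have del: "recip_degree m (del_vertex i E) r = card (?S - {i})"
    unfolding recip_degree_def by (metis (no_types, lifting) card_image insert_index_inj_on)
  have deg: "recip_degree (Suc m) E ?v = card ?S"
    by (simp add: recip_degree_def)
  have i_in_S: "i \<in> ?S \<longleftrightarrow> ?v = j"
    using i ij unique[OF v] by auto
  show ?thesis
  proof (cases "?v = j")
    case True
    then show ?thesis
      unfolding deg del using card_Suc_Diff1[of ?S i] i_in_S by simp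
  next
    case False
    then show ?thesis
      unfolding deg del using i_in_S by simp
  qed
qed

lemma recip_degree_leaf:
  assumes "digraph n E" and ij: "(i, j) \<in> E" "(j, i) \<in> E"
    and unique: "\<And>k. k \<noteq> i \<Longrightarrow> (i, k) \<in> E \<or> (k, i) \<in> E \<Longrightarrow> k = j"
  shows "recip_degree n E i = 1"
proof -
  have "{k \<in> {0..<n}. (i, k) \<in> E \<and> (k, i) \<in> E} = {j}"
    using assms unfolding digraph_def by (auto, metis)
  then show ?thesis by (simp add: recip_degree_def)
qed

lemma ddgl_carrier: "ddgl n E \<in> carrier_mat n n"
  by (simp add: ddgl_def Let_def poly_mat3_def)

lemma ddgl_leaf_elimination:
  assumes G: "digraph (Suc m) E" and i: "i < Suc m" and ji: "j \<noteq> i"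
    and ij: "(i, j) \<in> E" "(j, i) \<in> E"
    and unique: "\<And>k. k \<noteq> i \<Longrightarrow> (i, k) \<in> E \<or> (k, i) \<in> E \<Longrightarrow> k = j"
  shows "leaf_elimination (ddgl (Suc m) E) (ddgl m (del_vertex i E)) m i j [:0, 1:]"
proof
  have loop_free: "(k, k) \<notin> E" for k
    using G by (simp add: digraph_def)
  have ins: "insert_index i k < Suc m" "insert_index i k \<noteq> i" if "k < m" for k
    using that by (auto simp: insert_index_def)
  show "ddgl (Suc m) E \<in> carrier_mat (Suc m) (Suc m)" "ddgl m (del_vertex i E) \<in> carrier_mat m m"
    by (rule ddgl_carrier)+
  show "i < Suc m" "j \<noteq> i" by fact+
  show "j < Suc m" using G ij by (auto simp: digraph_def)
  then show "ddgl (Suc m) E $$ (i, i) = 1"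
    using recip_degree_leaf[OF G ij unique] loop_free by (simp add: ddgl_index[OF i i])
  show "ddgl (Suc m) E $$ (i, k) = (if k = j then - [:0, 1:] else 0)"
    if "k < Suc m" "k \<noteq> i" for k
  proof -
    have "(i, k) \<in> E \<longleftrightarrow> k = j" "(k, i) \<in> E \<longleftrightarrow> k = j"
      using that ij unique by blast+
    then show ?thesis
      using that by (simp add: ddgl_index[OF i that(1)])
  qed
  show "ddgl (Suc m) E $$ (k, i) = (if k = j then - [:0, 1:] else 0)"
    if "k < Suc m" "k \<noteq> i" for k
  proof -
    have "(i, k) \<in> E \<longleftrightarrow> k = j" "(k, i) \<in> E \<longleftrightarrow> k = j"
      using that ij unique by blast+
    then show ?thesis
      using that by (simp add: ddgl_index[OF that(1) i])
  qed
  show "ddgl m (del_vertex i E) $$ (r, c) = ddgl (Suc m) E $$ (insert_index i r, insert_index i c)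
      - (if insert_index i r = j \<and> insert_index i c = j then [:0, 1:] * [:0, 1:] else 0)"
    if rc: "r < m" "c < m" for r c
  proof -
    let ?R = "insert_index i r" and ?C = "insert_index i c"
    have ins_eq: "?R = ?C \<longleftrightarrow> r = c"
      by (auto simp: insert_index_def)
    let ?d = "of_nat (recip_degree m (del_vertex i E) r) :: complex"
    have reduced: "ddgl m (del_vertex i E) $$ (r, c) = [:of_bool (r = c), - of_bool ((?R, ?C) \<in> E),
        of_bool (r = c) * (?d - 1), of_bool ((?R, ?C) \<in> E \<and> (?C, ?R) \<notin> E):]"
      by (simp add: ddgl_index rc mem_del_vertex)
    have original: "ddgl (Suc m) E $$ (?R, ?C) = [:of_bool (r = c), - of_bool ((?R, ?C) \<in> E),
        of_bool (r = c) * (?d + of_bool (?R = j) - 1), of_bool ((?R, ?C) \<in> E \<and> (?C, ?R) \<notin> E):]"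
      using recip_degree_del_vertex[OF i ij unique, of r]
      by (simp add: ddgl_index ins[OF rc(1)] ins[OF rc(2)] ins_eq)
    show ?thesis
      unfolding reduced original using ins_eq by (cases "r = c"; cases "?R = j") auto
  qed
qed

theorem theorem3p8:
  fixes n i :: nat and E :: "(nat \<times> nat) set"
  assumes "digraph n E" and "i < n" and "reciprocal_leaf E i"
  defines "M \<equiv> ddgl n E" and "M' \<equiv> ddgl (n - 1) (del_vertex i E)"
  shows "\<forall>x :: complex. (finite_eigenvalue M x \<longleftrightarrow> finite_eigenvalue M' x)
           \<and> (finite_eigenvalue M x \<longrightarrow>
                alg_mult M x = alg_mult M' x \<and> geom_mult M x = geom_mult M' x)"
proof -
  obtain j where ji: "j \<noteq> i" and ij: "(i, j) \<in> E" "(j, i) \<in> E"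
    and unique: "\<And>k. k \<noteq> i \<Longrightarrow> (i, k) \<in> E \<or> (k, i) \<in> E \<Longrightarrow> k = j"
    using reciprocal_leafE[OF assms(3)] by metis
  obtain m where n: "n = Suc m"
    using assms(2) by (cases n) auto
  have elim: "leaf_elimination M M' m i j [:0, 1:]"
    unfolding M_def M'_def n diff_Suc_1
    using ddgl_leaf_elimination[OF _ _ ji ij unique] assms(1,2) n by simp
  have det: "det M = det M'"
    by (rule leaf_elimination.det_eq[OF elim])
  have geom: "geom_mult M x = geom_mult M' x" for x
    unfolding geom_mult_def by (rule leaf_elimination_kernel_dim[OF leaf_elimination_eval_pmat[OF elim]])
  have "square_mat M" "square_mat M'"
    using carrier_matD[OF ddgl_carrier] by (simp_all add: M_def M'_def)
  then show ?thesis
    unfolding finite_eigenvalue_def regular_pmat_def alg_mult_def det geom by simp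
qed

end
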